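(* For $\epsilon\in\mathbb{R}$ let $$\Phi_{1,\epsilon}(x,y)=\left(\frac{-2\epsilon x^{2}+(1-\epsilon^{2})x-2\epsilon y^{2}-2\epsilon y}{D(x,y)},\ \frac{-2\epsilon^{2}x^{2}+2\epsilon x-2\epsilon^{2}y^{2}+(1-\epsilon^{2})y}{D(x,y)}\right),$$ $D(x,y)=4\epsilon^{2}x^{2}+4\epsilon^{2}y^{2}+4\epsilon^{2}y+\epsilon^{2}-4\epsilon x+1$ (the KHK map of $\dot x=-y+x^2-y^2$, $\dot y=x(1+2y)$). For $h\in\mathcal{H}=\{h\leq -1\}\cup\{h\geq 0\}$ let $C_h=\{x^2+y^2-h(1+2y)=0\}$ and let $C_\infty=\{y=-1/2\}\cup\{\infty\}$. Then for every fixed $\epsilon\in\mathbb{R}$ and every $h\in\mathcal{H}\cup\{\infty\}$, the map $\Phi_{1,\epsilon}|_{C_h}$ is conjugate to a rotation with rotation number $$\rho_\pm(\epsilon)=\frac{1}{2\pi}\arg\left(\frac{1-\epsilon^2}{1+\epsilon^2}\pm i\,\frac{2\epsilon}{1+\epsilon^2}\right),$$ where $\rho_+$ holds for $h\geq 0$ (the circles surrounding $(0,0)$) and for $C_\infty$, and $\rho_-$ holds for $h\leq -1$ (the circles surrounding $(0,-1)$).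
   Context: $\arg$ takes values in $[0,2\pi)$. $C_\infty$ is the invariant line $y=-1/2$ completed with its point at infinity, a topological circle. *)

theory Defs
  imports "HOL-Complex_Analysis.Complex_Analysis"
begin

definition khk_den :: "real \<Rightarrow> real \<Rightarrow> real \<Rightarrow> real" where
  "khk_den e x y = 4*e^2*x^2 + 4*e^2*y^2 + 4*e^2*y + e^2 - 4*e*x + 1"

definition khk :: "real \<Rightarrow> real \<times> real \<Rightarrow> real \<times> real" where
  "khk e p = (let x = fst p; y = snd p in
     ((-2*e*x^2 + (1 - e^2)*x - 2*e*y^2 - 2*e*y) / khk_den e x y,
      (-2*e^2*x^2 + 2*e*x - 2*e^2*y^2 + (1 - e^2)*y) / khk_den e x y))"

definition curve :: "real \<Rightarrow> (real \<times> real) set" where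
  "curve h = {(x, y). x^2 + y^2 - h*(1 + 2*y) = 0}"

definition arg0 :: "complex \<Rightarrow> real" where
  "arg0 z = (if Arg z < 0 then Arg z + 2*pi else Arg z)"

definition rho_plus :: "real \<Rightarrow> real" where
  "rho_plus e = arg0 (Complex ((1 - e^2)/(1 + e^2)) (2*e/(1 + e^2))) / (2*pi)"

definition rho_minus :: "real \<Rightarrow> real" where
  "rho_minus e = arg0 (Complex ((1 - e^2)/(1 + e^2)) (- (2*e/(1 + e^2)))) / (2*pi)"

abbreviation S1 :: "complex set" where "S1 \<equiv> sphere 0 1"

text \<open>Phi restricted to a circle C (of centre c and radius r) is conjugate to the rotation
  with rotation number rho by an orientation preserving homeomorphism psi : C -> S^1
  (C oriented counterclockwise).\<close>
definition conj_rot_circle ::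
  "(real \<times> real) set \<Rightarrow> (real \<times> real \<Rightarrow> real \<times> real) \<Rightarrow> real \<Rightarrow> real \<times> real \<Rightarrow> real \<Rightarrow> bool" where
  "conj_rot_circle C F rho c r \<longleftrightarrow>
     (\<exists>psi. homeomorphic_map (top_of_set C) (top_of_set S1) psi \<and>
        winding_number (\<lambda>t. psi (fst c + r * cos (2*pi*t), snd c + r * sin (2*pi*t))) 0 = 1 \<and>
        (\<forall>p\<in>C. F p \<in> C \<and> psi (F p) = cis (2*pi*rho) * psi p))"

text \<open>The extended line R u {infinity} (None = infinity), with the one-point
  compactification topology.\<close>
definition extline_open :: "real option set \<Rightarrow> bool" where
  "extline_open U \<longleftrightarrow> open (Some -` U) \<and> (None \<in> U \<longrightarrow> bounded (Some -` (UNIV - U)))"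

definition extline :: "real option topology" where
  "extline = topology extline_open"

definition extline_loop :: "real \<Rightarrow> real option" where
  "extline_loop t = (if 0 < t \<and> t < 1 then Some (tan (pi*(t - 1/2))) else None)"

text \<open>Phi on C_infinity = {y = -1/2} u {infinity}, in the x-coordinate, extended by continuity.\<close>
definition khk_inf :: "real \<Rightarrow> real option \<Rightarrow> real option" where
  "khk_inf e q = (case q of
      None \<Rightarrow> (if e = 0 then None else Some (-1/(2*e)))
    | Some x \<Rightarrow> (if khk_den e x (-1/2) = 0 then None else Some (fst (khk e (x, -1/2)))))"

definition conj_rot_inf :: "(real option \<Rightarrow> real option) \<Rightarrow> real \<Rightarrow> bool" where
  "conj_rot_inf F rho \<longleftrightarrow>
     (\<exists>psi. homeomorphic_map extline (top_of_set S1) psi \<and>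
        winding_number (psi \<circ> extline_loop) 0 = 1 \<and>
        (\<forall>q. psi (F q) = cis (2*pi*rho) * psi q))"

end

theory Submission
  imports Defs
begin

(* In the complex coordinate z = x + i y the KHK map is the Moebius transformation
   z |-> (1 + i e) z / (1 - i e - 2 e z). It fixes 0 and -i, and the cross ratio w = z / (z + i)
   conjugates it to the rotation w |-> lambda w, lambda = (1 + i e) / (1 - i e) = cis (2 pi rho_plus e).
   In the coordinate w the curve C_h is the circle |w| = sqrt (h / (1 + h)) and C_infinity is |w| = 1,
   so w, rescaled to the unit circle, conjugates the map on each of them to the rotation by lambda.
   Orientation decides the rotation number: along C_h run counterclockwise, w winds once around 0
   when C_h surrounds 0 (h > 0), but once clockwise when C_h surrounds -i (h < -1); there 1/w is
   used instead, which rotates by 1/lambda = cis (2 pi rho_minus e). *)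

section \<open>The KHK map as a Moebius transformation\<close>

definition to_complex :: "real \<times> real \<Rightarrow> complex" where
  "to_complex p = Complex (fst p) (snd p)"

lemma Re_to_complex [simp]: "Re (to_complex p) = fst p"
  and Im_to_complex [simp]: "Im (to_complex p) = snd p"
  by (simp_all add: to_complex_def)

lemma to_complex_Re_Im [simp]: "to_complex (Re z, Im z) = z"
  by (simp add: to_complex_def)

lemma continuous_on_to_complex [continuous_intros]:
  "continuous_on S f \<Longrightarrow> continuous_on S (\<lambda>x. to_complex (f x))"
  unfolding to_complex_def by (intro continuous_intros)

definition khk_mobius_den :: "real \<Rightarrow> complex \<Rightarrow> complex" where
  "khk_mobius_den e z = 1 - \<i> * e - 2 * e * z"

definition khk_mobius :: "real \<Rightarrow> complex \<Rightarrow> complex" where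
  "khk_mobius e z = (1 + \<i> * e) * z / khk_mobius_den e z"

lemma khk_den_eq_norm: "khk_den e (Re z) (Im z) = (cmod (khk_mobius_den e z))\<^sup>2"
  unfolding cmod_power2 by (simp add: khk_den_def khk_mobius_den_def power2_eq_square algebra_simps)

lemma to_complex_khk: "to_complex (khk e p) = khk_mobius e (to_complex p)"
proof -
  obtain x y where p: "p = (x, y)" by (cases p)
  have "khk_den e x y = (Re (khk_mobius_den e (Complex x y)))\<^sup>2 + (Im (khk_mobius_den e (Complex x y)))\<^sup>2"
    using khk_den_eq_norm[of e "Complex x y"] by (simp add: cmod_power2)
  then show ?thesis
    by (simp add: p khk_def Let_def khk_mobius_def to_complex_def complex_eq_iff Re_divide Im_divide
        khk_mobius_den_def power2_eq_square algebra_simps)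
qed

lemma khk_mobius_den_nonzero:
  assumes "Im z \<noteq> -1/2" shows "khk_mobius_den e z \<noteq> 0"
proof
  assume "khk_mobius_den e z = 0"
  then have "1 - 2 * e * Re z = 0" and "e * (1 + 2 * Im z) = 0"
    by (auto simp: khk_mobius_den_def complex_eq_iff algebra_simps)
  with assms show False by auto
qed

lemma khk_mobius_plus_i:
  "khk_mobius_den e z \<noteq> 0 \<Longrightarrow>
     khk_mobius e z + \<i> = (1 - \<i> * e) * (z + \<i>) / khk_mobius_den e z"
  by (simp add: khk_mobius_def khk_mobius_den_def field_simps)

definition cayley :: "complex \<Rightarrow> complex" where
  "cayley z = z / (z + \<i>)"

definition cayley_inv :: "complex \<Rightarrow> complex" where
  "cayley_inv w = \<i> * w / (1 - w)"

lemma cayley_inv_cayley: "z + \<i> \<noteq> 0 \<Longrightarrow> cayley_inv (cayley z) = z"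
  by (simp add: cayley_def cayley_inv_def field_simps)

lemma cayley_cayley_inv: "w \<noteq> 1 \<Longrightarrow> cayley (cayley_inv w) = w"
  by (simp add: cayley_def cayley_inv_def field_simps)

definition khk_multiplier :: "real \<Rightarrow> complex" where
  "khk_multiplier e = (1 + \<i> * e) / (1 - \<i> * e)"

lemma one_minus_i_mult_nonzero: "1 - \<i> * complex_of_real e \<noteq> 0"
  and one_plus_i_mult_nonzero: "1 + \<i> * complex_of_real e \<noteq> 0"
  by (simp_all add: complex_eq_iff)

lemma cayley_khk_mobius:
  assumes "khk_mobius_den e z \<noteq> 0" and "z + \<i> \<noteq> 0"
  shows "cayley (khk_mobius e z) = khk_multiplier e * cayley z"
  using assms one_minus_i_mult_nonzero[of e]
  by (simp add: cayley_def khk_multiplier_def khk_mobius_plus_i) (simp add: khk_mobius_def)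

lemma norm_khk_multiplier [simp]: "cmod (khk_multiplier e) = 1"
proof -
  have "cmod (1 + \<i> * complex_of_real e) = cmod (1 - \<i> * complex_of_real e)"
    by (simp add: cmod_def)
  then show ?thesis
    using one_minus_i_mult_nonzero[of e] by (simp add: khk_multiplier_def norm_divide)
qed

lemma cis_arg0:
  assumes "cmod z = 1" shows "cis (arg0 z) = z"
proof -
  have "z \<noteq> 0"
    using assms by auto
  then have "cis (Arg z) = z"
    using assms cis_Arg[of z] by (simp add: sgn_div_norm)
  moreover have "cis (Arg z + 2*pi) = cis (Arg z)"
    by (simp add: cis.ctr)
  ultimately show ?thesis
    by (simp add: arg0_def)
qed

lemma khk_multiplier_eq_Complex:
  "Complex ((1 - e\<^sup>2)/(1 + e\<^sup>2)) (2*e/(1 + e\<^sup>2)) = khk_multiplier e"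
proof -
  have "1 + e\<^sup>2 \<noteq> 0"
    by (simp add: add_nonneg_eq_0_iff)
  then have "(1 - e\<^sup>2)/(1 + e\<^sup>2) + 2*e/(1 + e\<^sup>2) * e = 1"
    and "2*e/(1 + e\<^sup>2) - (1 - e\<^sup>2)/(1 + e\<^sup>2) * e = e"
    by (simp_all add: divide_simps) (simp_all add: power2_eq_square algebra_simps)
  then have "Complex ((1 - e\<^sup>2)/(1 + e\<^sup>2)) (2*e/(1 + e\<^sup>2)) * (1 - \<i> * e) = 1 + \<i> * e"
    by (simp add: complex_eq_iff)
  then show ?thesis
    unfolding khk_multiplier_def by (rule eq_divide_imp[OF one_minus_i_mult_nonzero])
qed

lemma cis_rho_plus: "cis (2*pi*rho_plus e) = khk_multiplier e"
  unfolding rho_plus_def khk_multiplier_eq_Complex by (simp add: cis_arg0)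

lemma cis_rho_minus: "cis (2*pi*rho_minus e) = inverse (khk_multiplier e)"
proof -
  have "Complex ((1 - e\<^sup>2)/(1 + e\<^sup>2)) (- (2*e/(1 + e\<^sup>2))) = cnj (khk_multiplier e)"
    by (simp flip: khk_multiplier_eq_Complex add: complex_eq_iff)
  also have "\<dots> = inverse (khk_multiplier e)"
    by (simp add: khk_multiplier_def)
  finally show ?thesis
    unfolding rho_minus_def by (simp add: cis_arg0 norm_inverse)
qed

section \<open>The circles C_h\<close>

definition curve_ratio :: "real \<Rightarrow> real" where
  "curve_ratio h = sqrt (h / (1 + h))"

lemma curve_ratio_pos: "0 < h / (1 + h) \<Longrightarrow> 0 < curve_ratio h"
  by (simp add: curve_ratio_def)

lemma curve_ratio_neq_1: "curve_ratio h \<noteq> 1"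
  by (cases "1 + h = 0") (auto simp: curve_ratio_def divide_eq_1_iff)

lemma mem_curve_iff_norms:
  "p \<in> curve h \<longleftrightarrow> (1 + h) * (cmod (to_complex p))\<^sup>2 = h * (cmod (to_complex p + \<i>))\<^sup>2"
  unfolding cmod_power2 by (cases p) (simp add: curve_def power2_eq_square algebra_simps)

(* The point z = -i, on no such curve, is excluded on the right as well: cayley (-i) = 0. *)
lemma mem_curve_iff_norm_cayley:
  assumes q: "0 < h / (1 + h)"
  shows "p \<in> curve h \<longleftrightarrow> cmod (cayley (to_complex p)) = curve_ratio h"
proof (cases "to_complex p + \<i> = 0")
  case True
  then have "to_complex p = - \<i>"
    by (simp add: eq_neg_iff_add_eq_0)
  then show ?thesis
    using q curve_ratio_pos[OF q] by (auto simp: mem_curve_iff_norms cayley_def)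
next
  case False
  have "1 + h \<noteq> 0"
    using q by auto
  have "p \<in> curve h \<longleftrightarrow> (cmod (cayley (to_complex p)))\<^sup>2 = h / (1 + h)"
    using False \<open>1 + h \<noteq> 0\<close>
    by (simp add: mem_curve_iff_norms cayley_def norm_divide power_divide field_simps)
  also have "\<dots> \<longleftrightarrow> cmod (cayley (to_complex p)) = curve_ratio h"
    using q by (auto simp: curve_ratio_def real_sqrt_unique)
  finally show ?thesis .
qed

lemma curve_off_line: "p \<in> curve h \<Longrightarrow> snd p \<noteq> -1/2"
  by (cases p) (auto simp: curve_def power2_eq_square add_nonneg_eq_0_iff)

lemma curve_snd_eq_minus_1: "p \<in> curve h \<Longrightarrow> snd p = -1 \<Longrightarrow> h \<le> -1"
  by (cases p) (simp add: curve_def, smt (verit) zero_le_power2)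

lemma curve_snd_eq_0: "p \<in> curve h \<Longrightarrow> snd p = 0 \<Longrightarrow> 0 \<le> h"
  by (cases p) (simp add: curve_def, smt (verit) zero_le_power2)

lemma mem_curve_nonzero:
  assumes q: "0 < h / (1 + h)" and p: "p \<in> curve h"
  shows "to_complex p \<noteq> 0" and "to_complex p + \<i> \<noteq> 0"
  using p curve_ratio_pos[OF q] by (auto simp: mem_curve_iff_norm_cayley[OF q] cayley_def)

definition circle_chart :: "real \<Rightarrow> real \<times> real \<Rightarrow> complex" where
  "circle_chart h p = cayley (to_complex p) / curve_ratio h"

lemma circle_chart_khk:
  assumes q: "0 < h / (1 + h)" and p: "p \<in> curve h"
  shows "khk e p \<in> curve h"
    and "circle_chart h (khk e p) = khk_multiplier e * circle_chart h p"
proof -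
  define z where "z = to_complex p"
  have "khk_mobius_den e z \<noteq> 0"
    using curve_off_line[OF p] by (intro khk_mobius_den_nonzero) (simp add: z_def)
  moreover have "z + \<i> \<noteq> 0"
    using mem_curve_nonzero[OF q p] by (simp add: z_def)
  ultimately have *: "cayley (to_complex (khk e p)) = khk_multiplier e * cayley z"
    by (simp add: to_complex_khk cayley_khk_mobius z_def)
  show "khk e p \<in> curve h"
    using p by (simp add: mem_curve_iff_norm_cayley[OF q] * norm_mult z_def)
  show "circle_chart h (khk e p) = khk_multiplier e * circle_chart h p"
    by (simp add: circle_chart_def * z_def)
qed

lemma circle_chart_homeomorphic:
  assumes q: "0 < h / (1 + h)"
  shows "homeomorphic_map (top_of_set (curve h)) (top_of_set S1) (circle_chart h)"
proof -
  define r where "r = curve_ratio h"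
  define g where "g w = (Re (cayley_inv (r * w)), Im (cayley_inv (r * w)))" for w :: complex
  have r: "0 < r" "r \<noteq> 1"
    using curve_ratio_pos[OF q] curve_ratio_neq_1 by (simp_all add: r_def)
  have curve: "p \<in> curve h \<longleftrightarrow> cmod (cayley (to_complex p)) = r" for p
    by (simp add: mem_curve_iff_norm_cayley[OF q] r_def)
  have chart: "circle_chart h p = cayley (to_complex p) / r" for p
    by (simp add: circle_chart_def r_def)
  note ne = mem_curve_nonzero(2)[OF q]
  have ne1: "r * w \<noteq> 1" if "w \<in> S1" for w :: complex
    using that r by (auto dest: arg_cong[of _ _ cmod] simp: norm_mult)
  have "continuous_on (curve h) (circle_chart h)"
    using ne r unfolding chart cayley_def by (auto intro!: continuous_intros)
  moreover have "continuous_on S1 g"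
    using ne1 unfolding g_def cayley_inv_def by (auto intro!: continuous_intros)
  moreover have "circle_chart h p \<in> S1" if "p \<in> curve h" for p
    using that r by (simp add: curve chart norm_divide)
  moreover have "g w \<in> curve h" and "circle_chart h (g w) = w" if "w \<in> S1" for w
    using that ne1[OF that] r
    by (simp_all add: curve g_def chart cayley_cayley_inv norm_mult)
  moreover have "g (circle_chart h p) = p" if "p \<in> curve h" for p
    using ne[OF that] r by (simp add: g_def chart cayley_inv_cayley)
  ultimately show ?thesis
    unfolding homeomorphic_map_maps homeomorphic_maps_def
    by (intro exI[of _ g]) auto
qed

lemma winding_number_eq_if_not_opposite:
  fixes g h :: "real \<Rightarrow> complex"
  assumes "path g" "path h" "pathfinish g = pathstart g" "pathfinish h = pathstart h"
    and not_opposite: "\<And>t. t \<in> {0..1} \<Longrightarrow> Im (g t / h t) \<noteq> 0 \<or> 0 < Re (g t / h t)"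
  shows "winding_number h 0 = winding_number g 0"
proof (rule winding_number_loops_linear_eq[OF assms(1-4)])
  fix t :: real
  assume t: "t \<in> {0..1}"
  show "0 \<notin> closed_segment (g t) (h t)"
  proof
    assume "0 \<in> closed_segment (g t) (h t)"
    then obtain u :: real where u: "0 \<le> u" "u \<le> 1" "(1 - u) * g t + u * h t = 0"
      by (auto simp: closed_segment_def scaleR_conv_of_real)
    define w where "w = g t / h t"
    have "h t \<noteq> 0"
      using not_opposite[OF t] by auto
    with u(3) have "of_real (1 - u) * w + of_real u = 0"
      by (simp add: w_def field_simps)
    then have "(1 - u) * Im w = 0" "(1 - u) * Re w + u = 0"
      by (simp_all add: complex_eq_iff)
    then show False
      using not_opposite[OF t] u(1,2) unfolding w_def [symmetric]
      by (cases "u = 1") (auto simp: add_nonneg_eq_0_iff)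
  qed
qed

lemma to_complex_circle_param:
  "to_complex (r * cos (2*pi*t), h + r * sin (2*pi*t)) = circlepath (\<i> * h) r t"
  by (simp add: circlepath_def part_circlepath_def linepath_def complex_eq_iff Re_exp Im_exp
      mult.commute)

lemma circlepath_in_curve:
  assumes "0 \<le> h\<^sup>2 + h"
  shows "(Re (circlepath (\<i> * h) (sqrt (h\<^sup>2 + h)) t), Im (circlepath (\<i> * h) (sqrt (h\<^sup>2 + h)) t))
           \<in> curve h"
proof -
  define z where "z = circlepath (\<i> * h) (sqrt (h\<^sup>2 + h)) t"
  define r c s where "r = sqrt (h\<^sup>2 + h)" and "c = cos (2*pi*t)" and "s = sin (2*pi*t)"
  have z: "(Re z, Im z) = (r * c, h + r * s)"
    using to_complex_circle_param[of r t h, symmetric] by (simp add: z_def r_def c_def s_def)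
  have "(r * c)\<^sup>2 + (h + r * s)\<^sup>2 - h * (1 + 2 * (h + r * s)) = r\<^sup>2 * (c\<^sup>2 + s\<^sup>2) - (h\<^sup>2 + h)"
    by (simp add: power2_eq_square algebra_simps)
  also have "\<dots> = 0"
    using assms by (simp add: r_def c_def s_def)
  finally show ?thesis
    by (simp add: z [unfolded z_def] curve_def)
qed

lemma winding_number_circle_chart_pos:
  assumes h: "0 < h"
  shows "winding_number
    (\<lambda>t. circle_chart h (sqrt (h\<^sup>2 + h) * cos (2*pi*t), h + sqrt (h\<^sup>2 + h) * sin (2*pi*t))) 0 = 1"
proof -
  define r where "r = sqrt (h\<^sup>2 + h)"
  define \<gamma> where "\<gamma> = circlepath (\<i> * h) r"
  define f where "f z = cayley z / curve_ratio h" for z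
  have q: "0 < h / (1 + h)" and r: "0 < curve_ratio h"
    using h by (simp_all add: curve_ratio_pos)
  have p: "(Re (\<gamma> t), Im (\<gamma> t)) \<in> curve h" for t
    using h circlepath_in_curve[of h t] by (simp add: \<gamma>_def r_def)
  have "Im (\<gamma> t) \<noteq> -1" for t
    using curve_snd_eq_minus_1[OF p] h by force
  then have ne: "\<gamma> t \<noteq> 0" "\<gamma> t + \<i> \<noteq> 0" "Im (\<gamma> t + \<i>) \<noteq> 0" for t
    using mem_curve_nonzero[OF q p] by (auto simp: add_eq_0_iff2)
  then have ratio: "\<gamma> t / f (\<gamma> t) = (\<gamma> t + \<i>) * curve_ratio h" for t
    using r by (simp add: f_def cayley_def)
  have "continuous_on (path_image \<gamma>) f"
    using ne r by (auto simp: f_def cayley_def path_image_def intro!: continuous_intros)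
  moreover have "path \<gamma>" "pathfinish \<gamma> = pathstart \<gamma>"
    by (simp_all add: \<gamma>_def)
  ultimately have "winding_number (f \<circ> \<gamma>) 0 = winding_number \<gamma> 0"
    using ne r
    by (intro winding_number_eq_if_not_opposite path_continuous_image)
      (simp_all add: ratio pathstart_compose pathfinish_compose)
  also have "\<dots> = 1"
    unfolding \<gamma>_def using h
    by (intro winding_number_circlepath) (simp add: r_def norm_mult real_less_rsqrt)
  finally show ?thesis
    by (simp add: o_def f_def \<gamma>_def r_def circle_chart_def to_complex_circle_param)
qed

lemma winding_number_inverse_circle_chart_neg:
  assumes h: "h < -1"
  shows "winding_number
    (\<lambda>t. inverse (circle_chart h (sqrt (h\<^sup>2 + h) * cos (2*pi*t), h + sqrt (h\<^sup>2 + h) * sin (2*pi*t)))) 0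
    = 1"
proof -
  define r where "r = sqrt (h\<^sup>2 + h)"
  define \<gamma> where "\<gamma> = circlepath (\<i> * h) r"
  define f where "f z = inverse (cayley z / curve_ratio h)" for z
  have q: "0 < h / (1 + h)" and r: "0 < curve_ratio h"
    using h by (simp_all add: curve_ratio_pos zero_less_divide_iff)
  have "0 < h * (1 + h)"
    using h by (intro mult_neg_neg) auto
  then have p: "(Re (\<gamma> t), Im (\<gamma> t)) \<in> curve h" for t
    using circlepath_in_curve[of h t] by (simp add: \<gamma>_def r_def power2_eq_square algebra_simps)
  have ne: "\<gamma> t \<noteq> 0" "\<gamma> t + \<i> \<noteq> 0" "Im (\<gamma> t) \<noteq> 0" for t
    using mem_curve_nonzero[OF q p] curve_snd_eq_0[OF p] h by fastforce+
  then have ratio: "(\<gamma> t + \<i>) / f (\<gamma> t) = \<gamma> t / curve_ratio h" for t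
    using r by (simp add: f_def cayley_def)
  have "continuous_on (path_image \<gamma>) f"
    using ne r by (auto simp: f_def cayley_def path_image_def intro!: continuous_intros)
  moreover have "path \<gamma>" "pathfinish \<gamma> = pathstart \<gamma>"
    by (simp_all add: \<gamma>_def)
  moreover have "path (\<lambda>t. \<gamma> t + \<i>)"
    using \<open>path \<gamma>\<close> unfolding path_def by (intro continuous_intros)
  ultimately have "winding_number (f \<circ> \<gamma>) 0 = winding_number (\<lambda>t. \<gamma> t + \<i>) 0"
    using ne r
    by (intro winding_number_eq_if_not_opposite path_continuous_image)
      (simp_all add: ratio pathstart_compose pathfinish_compose pathstart_def pathfinish_def)
  also have "\<dots> = winding_number \<gamma> (- \<i>)"
    by (simp add: winding_number_offset[of \<gamma> "- \<i>"])
  also have "\<dots> = 1"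
  proof -
    have "cmod (- \<i> - \<i> * complex_of_real h) = \<bar>1 + h\<bar>"
      by (simp add: cmod_def power2_eq_square algebra_simps flip: real_sqrt_abs)
    also have "\<bar>1 + h\<bar> < r"
      unfolding r_def using h by (intro real_less_rsqrt) (simp add: power2_eq_square algebra_simps)
    finally show ?thesis
      unfolding \<gamma>_def by (intro winding_number_circlepath) simp
  qed
  finally show ?thesis
    by (simp add: o_def f_def \<gamma>_def r_def circle_chart_def to_complex_circle_param)
qed

lemma conj_rot_circle_khk_pos:
  assumes h: "0 < h"
  shows "conj_rot_circle (curve h) (khk e) (rho_plus e) (0, h) (sqrt (h\<^sup>2 + h))"
proof -
  have q: "0 < h / (1 + h)"
    using h by simp
  show ?thesis
    unfolding conj_rot_circle_def cis_rho_plus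
    using circle_chart_homeomorphic[OF q] winding_number_circle_chart_pos[OF h] circle_chart_khk[OF q]
    by (intro exI[of _ "circle_chart h"]) simp
qed

lemma homeomorphic_map_inverse_S1: "homeomorphic_map (top_of_set S1) (top_of_set S1) inverse"
  unfolding homeomorphic_map_maps homeomorphic_maps_def
  by (intro exI[of _ inverse]) (auto simp: norm_inverse intro!: continuous_intros)

lemma conj_rot_circle_khk_neg:
  assumes h: "h < -1"
  shows "conj_rot_circle (curve h) (khk e) (rho_minus e) (0, h) (sqrt (h\<^sup>2 + h))"
proof -
  have q: "0 < h / (1 + h)"
    using h by (simp add: zero_less_divide_iff)
  show ?thesis
    unfolding conj_rot_circle_def cis_rho_minus
    using homeomorphic_map_compose[OF circle_chart_homeomorphic[OF q] homeomorphic_map_inverse_S1]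
      winding_number_inverse_circle_chart_neg[OF h] circle_chart_khk[OF q]
    by (intro exI[of _ "inverse \<circ> circle_chart h"]) simp
qed

lemma curve_0: "curve 0 = {(0, 0)}"
  by (auto simp: curve_def sum_power2_eq_zero_iff)

lemma curve_minus_1: "curve (-1) = {(0, -1)}"
proof (rule set_eqI)
  fix p :: "real \<times> real"
  obtain x y where p: "p = (x, y)"
    by (cases p)
  have sq: "x\<^sup>2 + y\<^sup>2 - (-1) * (1 + 2*y) = x\<^sup>2 + (y + 1)\<^sup>2"
    by (simp add: power2_eq_square algebra_simps)
  have "p \<in> curve (-1) \<longleftrightarrow> x\<^sup>2 + (y + 1)\<^sup>2 = 0"
    unfolding p curve_def sq [symmetric] by simp
  also have "\<dots> \<longleftrightarrow> p \<in> {(0, -1)}"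
    by (auto simp: p sum_power2_eq_zero_iff)
  finally show "p \<in> curve (-1) \<longleftrightarrow> p \<in> {(0, -1)}" .
qed

lemma khk_fixes_0: "khk e (0, 0) = (0, 0)"
  by (simp add: khk_def Let_def)

lemma khk_fixes_0_minus_1: "khk e (0, -1) = (0, -1)"
proof -
  have "khk_den e 0 (-1) = 1 + e\<^sup>2"
    by (simp add: khk_den_def power2_eq_square)
  moreover have "1 + e\<^sup>2 \<noteq> 0"
    by (simp add: add_nonneg_eq_0_iff)
  ultimately show ?thesis
    by (simp add: khk_def Let_def power2_eq_square field_simps)
qed

section \<open>The line C_\<infinity>\<close>

lemma extline_open_eq_Alexandroff_open: "extline_open = Alexandroff_open euclidean"
proof (intro ext iffI)
  fix U :: "real option set"
  assume U: "extline_open U"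
  show "Alexandroff_open euclidean U"
  proof (cases "None \<in> U")
    case False
    have "U = Some ` (Some -` U)"
    proof (rule set_eqI)
      show "x \<in> U \<longleftrightarrow> x \<in> Some ` (Some -` U)" for x
        using False by (cases x) auto
    qed
    with U show ?thesis
      by (metis Alexandroff_open.base extline_open_def open_openin)
  next
    case True
    define C where "C = Some -` (UNIV - U)"
    have "bounded C" "closed C"
      using U True by (auto simp: C_def extline_open_def vimage_Diff closed_def)
    moreover have "U = insert None (Some ` (UNIV - C))"
    proof (rule set_eqI)
      show "x \<in> U \<longleftrightarrow> x \<in> insert None (Some ` (UNIV - C))" for x
        using True by (cases x) (auto simp: C_def)
    qed
    ultimately show ?thesis
      using Alexandroff_open.ext[of euclidean C] by (simp add: compact_eq_bounded_closed)
  qed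
next
  fix U :: "real option set"
  assume "Alexandroff_open euclidean U"
  then show "extline_open U"
  proof cases
    case (base V)
    then show ?thesis
      by (simp add: extline_open_def inj_vimage_image_eq)
  next
    case (ext C)
    then have "Some -` U = - C" "Some -` (UNIV - U) = C"
      by auto
    with ext show ?thesis
      by (simp add: extline_open_def compact_imp_bounded compact_imp_closed open_Compl)
  qed
qed

lemma openin_extline: "openin extline = extline_open"
  by (simp add: extline_def extline_open_eq_Alexandroff_open istopology_Alexandroff_open)

lemma topspace_extline [simp]: "topspace extline = UNIV"
  by (auto simp: extline_def extline_open_eq_Alexandroff_open
      simp flip: Alexandroff_compactification_def intro: option.exhaust)

lemma compact_space_extline: "compact_space extline"
  by (simp add: extline_def extline_open_eq_Alexandroff_open
      flip: Alexandroff_compactification_def)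

definition line_chart :: "real option \<Rightarrow> complex" where
  "line_chart q = (case q of None \<Rightarrow> 1 | Some x \<Rightarrow> cayley (to_complex (x, -1/2)))"

lemma norm_cayley_eq_1_iff:
  assumes "z + \<i> \<noteq> 0"
  shows "cmod (cayley z) = 1 \<longleftrightarrow> Im z = -1/2"
proof -
  have "cmod (cayley z) = 1 \<longleftrightarrow> cmod z = cmod (z + \<i>)"
    using assms by (auto simp: cayley_def norm_divide divide_eq_1_iff)
  also have "\<dots> \<longleftrightarrow> (cmod z)\<^sup>2 = (cmod (z + \<i>))\<^sup>2"
    by (simp add: power2_eq_iff_nonneg)
  also have "\<dots> \<longleftrightarrow> Im z = -1/2"
    unfolding cmod_power2 by (simp add: power2_eq_square algebra_simps) linarith
  finally show ?thesis .
qed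

lemma to_complex_plus_i_eq_0_iff [simp]: "to_complex p + \<i> = 0 \<longleftrightarrow> p = (0, -1)"
  by (cases p) (auto simp: complex_eq_iff)

lemma cayley_neq_1: "cayley z \<noteq> 1"
  by (simp add: cayley_def divide_eq_1_iff)

lemma norm_line_chart: "cmod (line_chart q) = 1"
  by (cases q) (simp_all add: line_chart_def norm_cayley_eq_1_iff)

lemma inj_line_chart: "inj line_chart"
proof (rule injI)
  fix q q' assume eq: "line_chart q = line_chart q'"
  show "q = q'"
  proof (cases q; cases q')
    fix x x' assume "q = Some x" "q' = Some x'"
    then have "cayley_inv (line_chart q) = to_complex (x, -1/2)"
      and "cayley_inv (line_chart q') = to_complex (x', -1/2)"
      by (simp_all add: line_chart_def cayley_inv_cayley)
    with eq \<open>q = Some x\<close> \<open>q' = Some x'\<close> show "q = q'"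
      by (simp add: to_complex_def)
  qed (use eq cayley_neq_1 in \<open>auto simp: line_chart_def\<close>)
qed

lemma range_line_chart: "range line_chart = S1"
proof (intro equalityI subsetI)
  fix w :: complex assume "w \<in> S1"
  show "w \<in> range line_chart"
  proof (cases "w = 1")
    case True
    then show ?thesis
      by (simp add: line_chart_def image_iff exI [of _ None])
  next
    case False
    define z where "z = cayley_inv w"
    have w: "cayley z = w"
      using False by (simp add: z_def cayley_cayley_inv)
    with \<open>w \<in> S1\<close> have "z + \<i> \<noteq> 0"
      by (auto simp: cayley_def)
    then have "Im z = -1/2"
      using norm_cayley_eq_1_iff w \<open>w \<in> S1\<close> by auto
    then have "to_complex (Re z, -1/2) = z"
      using to_complex_Re_Im[of z] by simp
    then have "line_chart (Some (Re z)) = w"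
      using w by (simp add: line_chart_def)
    then show ?thesis
      by (metis rangeI)
  qed
qed (auto simp: norm_line_chart)

lemma norm_one_minus_line_chart:
  assumes "x \<noteq> 0"
  shows "cmod (1 - line_chart (Some x)) \<le> 1 / \<bar>x\<bar>"
proof -
  define z where "z = to_complex (x, -1/2)"
  have ne: "z + \<i> \<noteq> 0"
    by (simp add: z_def)
  then have "1 - line_chart (Some x) = \<i> / (z + \<i>)"
    by (simp add: line_chart_def cayley_def z_def field_simps)
  moreover have "\<bar>x\<bar> \<le> cmod (z + \<i>)"
    using abs_Re_le_cmod[of "z + \<i>"] by (simp add: z_def)
  ultimately show ?thesis
    using assms by (simp add: norm_divide frac_le)
qed

lemma continuous_map_line_chart: "continuous_map extline (top_of_set S1) line_chart"
  unfolding continuous_map_def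
proof (intro conjI allI impI)
  show "line_chart \<in> topspace extline \<rightarrow> topspace (top_of_set S1)"
    by (simp add: norm_line_chart)
  fix U assume "openin (top_of_set S1) U"
  then obtain T where T: "open T" "U = S1 \<inter> T"
    by (auto simp: openin_open)
  have pre: "{q \<in> topspace extline. line_chart q \<in> U} = line_chart -` T"
    using T(2) by (auto simp: norm_line_chart)
  have "continuous_on UNIV (\<lambda>x. line_chart (Some x))"
    unfolding line_chart_def cayley_def by (auto intro!: continuous_intros)
  then have "open (Some -` line_chart -` T)"
    using open_vimage[OF T(1)] by (simp add: vimage_def)
  moreover have "bounded (Some -` (UNIV - line_chart -` T))" if "None \<in> line_chart -` T"
  proof -
    have "1 \<in> T"
      using that by (simp add: line_chart_def)
    then obtain d where d: "0 < d" "ball 1 d \<subseteq> T"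
      using T(1) open_contains_ball by blast
    have "\<bar>x\<bar> \<le> 1 / d" if "line_chart (Some x) \<notin> T" for x
    proof (cases "x = 0")
      case False
      have "d \<le> cmod (1 - line_chart (Some x))"
        using that d(2) by (force simp: dist_norm)
      also have "\<dots> \<le> 1 / \<bar>x\<bar>"
        using False by (rule norm_one_minus_line_chart)
      finally show ?thesis
        using False d(1) by (simp add: field_simps)
    qed (use d in simp)
    then have "Some -` (UNIV - line_chart -` T) \<subseteq> cball 0 (1 / d)"
      by auto
    then show ?thesis
      using bounded_cball bounded_subset by blast
  qed
  ultimately show "openin extline {q \<in> topspace extline. line_chart q \<in> U}"
    unfolding pre openin_extline extline_open_def by blast
qed

lemma homeomorphic_map_line_chart: "homeomorphic_map extline (top_of_set S1) line_chart"
  by (rule continuous_imp_homeomorphic_map)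
    (simp_all add: continuous_map_line_chart compact_space_extline Hausdorff_space_subtopology
      range_line_chart inj_line_chart)

lemma khk_den_on_line_eq_0_iff: "khk_den e x (-1/2) = 0 \<longleftrightarrow> e \<noteq> 0 \<and> x = 1 / (2*e)"
proof -
  have "khk_den e x (-1/2) = (2*e*x - 1)\<^sup>2"
    by (simp add: khk_den_def power2_eq_square algebra_simps)
  then show ?thesis
    by (auto simp: eq_divide_eq algebra_simps)
qed

lemma snd_khk_on_line:
  assumes "khk_den e x (-1/2) \<noteq> 0"
  shows "snd (khk e (x, -1/2)) = -1/2"
proof -
  have "-2*e\<^sup>2*x\<^sup>2 + 2*e*x - 2*e\<^sup>2*(-1/2)\<^sup>2 + (1 - e\<^sup>2)*(-1/2) = -1/2 * khk_den e x (-1/2)"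
    by (simp add: khk_den_def power2_eq_square field_simps)
  with assms show ?thesis
    by (simp add: khk_def Let_def)
qed

(* On the line, the Moebius map sends infinity to x = -1/(2e) and its pole x = 1/(2e) to infinity. *)

lemma cayley_khk_image_of_infinity:
  assumes "e \<noteq> 0"
  shows "cayley (to_complex (-1 / (2*e), -1/2)) = khk_multiplier e"
proof -
  define c where "c = complex_of_real (-1 / (2*e))"
  have "to_complex (-1 / (2*e), -1/2) = c * (1 + \<i> * e)"
    and "to_complex (-1 / (2*e), -1/2) + \<i> = c * (1 - \<i> * e)"
    using assms by (simp_all add: c_def complex_eq_iff)
  moreover have "c \<noteq> 0"
    using assms by (simp add: c_def)
  ultimately show ?thesis
    by (simp add: cayley_def khk_multiplier_def)
qed

lemma cayley_khk_pole:
  assumes "e \<noteq> 0"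
  shows "khk_multiplier e * cayley (to_complex (1 / (2*e), -1/2)) = 1"
proof -
  define c where "c = complex_of_real (1 / (2*e))"
  have "to_complex (1 / (2*e), -1/2) = c * (1 - \<i> * e)"
    and "to_complex (1 / (2*e), -1/2) + \<i> = c * (1 + \<i> * e)"
    using assms by (simp_all add: c_def complex_eq_iff)
  moreover have "c \<noteq> 0"
    using assms by (simp add: c_def)
  ultimately show ?thesis
    using one_minus_i_mult_nonzero[of e] one_plus_i_mult_nonzero[of e]
    by (simp add: cayley_def khk_multiplier_def)
qed

lemma line_chart_khk_inf: "line_chart (khk_inf e q) = khk_multiplier e * line_chart q"
proof (cases q)
  case None
  then show ?thesis
    using cayley_khk_image_of_infinity[of e]
    by (cases "e = 0") (simp_all add: khk_inf_def line_chart_def khk_multiplier_def)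
next
  case (Some x)
  show ?thesis
  proof (cases "khk_den e x (-1/2) = 0")
    case True
    then have "e \<noteq> 0" "x = 1 / (2*e)"
      using khk_den_on_line_eq_0_iff[of e x] by simp_all
    then show ?thesis
      using Some True cayley_khk_pole by (simp add: khk_inf_def line_chart_def)
  next
    case False
    define z where "z = to_complex (x, -1/2)"
    have "khk e (x, -1/2) = (fst (khk e (x, -1/2)), -1/2)"
      using snd_khk_on_line[OF False] by (metis prod.collapse)
    then have "to_complex (fst (khk e (x, -1/2)), -1/2) = khk_mobius e z"
      by (metis to_complex_khk z_def)
    moreover have "khk_mobius_den e z \<noteq> 0"
      using False khk_den_eq_norm[of e z] by (auto simp: z_def)
    ultimately show ?thesis
      using Some False by (simp add: khk_inf_def line_chart_def cayley_khk_mobius z_def)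
  qed
qed

lemma circlepath_unit_eq:
  fixes t :: real
  defines "s \<equiv> sin (pi * (t - 1/2))" and "c \<equiv> cos (pi * (t - 1/2))"
  shows "circlepath 0 1 t = Complex s (-c) / Complex s c"
proof -
  have sc: "s\<^sup>2 + c\<^sup>2 = 1"
    by (simp add: s_def c_def)
  have "2*pi*t = 2 * (pi * (t - 1/2)) + pi"
    by (simp add: algebra_simps)
  then have "cos (2*pi*t) = s\<^sup>2 - c\<^sup>2" and "sin (2*pi*t) = - 2 * s * c"
    by (simp_all add: s_def c_def cos_add sin_add cos_double sin_double)
  then have "circlepath 0 1 t = Complex (s\<^sup>2 - c\<^sup>2) (- 2 * s * c)"
    using to_complex_circle_param[of 1 t 0] by (simp add: to_complex_def)
  moreover have "Complex (s\<^sup>2 - c\<^sup>2) (- 2 * s * c) * Complex s c = Complex s (-c)"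
  proof -
    have "Complex (s\<^sup>2 - c\<^sup>2) (- 2 * s * c) * Complex s c = Complex (s * (s\<^sup>2 + c\<^sup>2)) (- c * (s\<^sup>2 + c\<^sup>2))"
      by (simp add: complex_eq_iff power2_eq_square algebra_simps)
    with sc show ?thesis
      by simp
  qed
  moreover have "Complex s c \<noteq> 0"
    using sc by (auto simp: complex_eq_iff)
  ultimately show ?thesis
    by (simp add: eq_divide_eq)
qed

lemma line_chart_extline_loop:
  fixes t :: real
  assumes t: "0 \<le> t" "t \<le> 1"
  defines "s \<equiv> sin (pi * (t - 1/2))" and "c \<equiv> cos (pi * (t - 1/2))"
  shows "line_chart (extline_loop t) = Complex (2 * s) (-c) / Complex (2 * s) c"
proof (cases "0 < t \<and> t < 1")
  case True
  then have "0 < c"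
    unfolding c_def by (intro cos_gt_zero_pi) (auto simp: algebra_simps)
  then have "to_complex (s / c, -1/2) = Complex (2 * s) (-c) / of_real (2 * c)"
    and "to_complex (s / c, -1/2) + \<i> = Complex (2 * s) c / of_real (2 * c)"
    by (simp_all add: complex_eq_iff)
  moreover have "extline_loop t = Some (s / c)"
    using True by (simp add: extline_loop_def tan_def s_def c_def)
  ultimately show ?thesis
    using \<open>0 < c\<close> by (simp add: line_chart_def cayley_def)
next
  case False
  with t have "t = 0 \<or> t = 1"
    by auto
  then show ?thesis
    by (auto simp: extline_loop_def line_chart_def s_def c_def complex_eq_iff)
qed

(* This is circlepath 0 1 t / line_chart (extline_loop t) by the two lemmas above, so the two loops
   are homotopic in the punctured plane. *)
lemma Re_ratio_cayley_loops_pos: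
  fixes s c :: real
  assumes sc: "s\<^sup>2 + c\<^sup>2 = 1"
  shows "0 < Re (Complex s (-c) / Complex s c / (Complex (2 * s) (-c) / Complex (2 * s) c))"
proof -
  define a b where "a = 2 * s\<^sup>2 + c\<^sup>2" and "b = s * c"
  have nz: "Complex s c \<noteq> 0" "Complex (2 * s) (-c) \<noteq> 0" "Complex (2 * s) c \<noteq> 0"
    using sc by (auto simp: complex_eq_iff)
  have "Complex s (-c) * Complex (2 * s) c = Complex a (-b)"
    and "Complex s c * Complex (2 * s) (-c) = Complex a b"
    by (simp_all add: complex_eq_iff a_def b_def power2_eq_square)
  with nz have eq: "Complex s (-c) / Complex s c / (Complex (2 * s) (-c) / Complex (2 * s) c)
      = Complex a (-b) / Complex a b"
    by (simp add: field_simps)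
  have "0 \<le> (s - c/2)\<^sup>2" "0 \<le> (s + c/2)\<^sup>2"
    by simp_all
  then have "0 < a - b" "0 < a + b"
    using sc by (simp_all add: a_def b_def power2_eq_square algebra_simps)
  then have "0 < a\<^sup>2 - b\<^sup>2"
    by (simp add: power2_eq_square square_diff_square_factored)
  moreover have "0 \<le> b\<^sup>2"
    by simp
  ultimately have "0 < (a\<^sup>2 - b\<^sup>2) / (a\<^sup>2 + b\<^sup>2)"
    by (intro divide_pos_pos) linarith+
  then show ?thesis
    unfolding eq by (simp add: Re_divide power2_eq_square)
qed

lemma winding_number_line_chart_loop: "winding_number (line_chart \<circ> extline_loop) 0 = 1"
proof -
  define s c where "s t = sin (pi * (t - 1/2))" and "c t = cos (pi * (t - 1/2))" for t :: real
  define F where "F t = Complex (2 * s t) (- c t) / Complex (2 * s t) (c t)" for t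
  have sc: "(s t)\<^sup>2 + (c t)\<^sup>2 = 1" for t
    by (simp add: s_def c_def)
  have "winding_number (line_chart \<circ> extline_loop) 0 = winding_number F 0"
    by (rule winding_number_cong) (simp add: line_chart_extline_loop F_def s_def c_def)
  also have "\<dots> = winding_number (circlepath 0 1) 0"
  proof (rule winding_number_eq_if_not_opposite)
    have "Complex (2 * s t) (c t) \<noteq> 0" for t
      using sc[of t] by (auto simp: complex_eq_iff)
    then show "path F"
      unfolding path_def F_def s_def c_def by (intro continuous_intros) auto
    show "pathfinish F = pathstart F"
      by (simp add: pathfinish_def pathstart_def F_def s_def c_def complex_eq_iff)
    show "Im (circlepath 0 1 t / F t) \<noteq> 0 \<or> 0 < Re (circlepath 0 1 t / F t)" for t
      using Re_ratio_cayley_loops_pos[OF sc[of t]] by (simp add: circlepath_unit_eq F_def s_def c_def)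
  qed simp_all
  also have "\<dots> = 1"
    by (rule winding_number_circlepath) simp
  finally show ?thesis .
qed

lemma conj_rot_inf_khk: "conj_rot_inf (khk_inf e) (rho_plus e)"
  unfolding conj_rot_inf_def cis_rho_plus
  using homeomorphic_map_line_chart winding_number_line_chart_loop line_chart_khk_inf by blast

theorem proposition9:
  fixes e :: real
  shows "(\<forall>h::real. h > 0 \<longrightarrow>
            conj_rot_circle (curve h) (khk e) (rho_plus e) (0, h) (sqrt (h^2 + h)))
       \<and> (\<forall>h::real. h < -1 \<longrightarrow>
            conj_rot_circle (curve h) (khk e) (rho_minus e) (0, h) (sqrt (h^2 + h)))
       \<and> curve 0 = {(0, 0)} \<and> khk e (0, 0) = (0, 0)
       \<and> curve (-1) = {(0, -1)} \<and> khk e (0, -1) = (0, -1)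
       \<and> (\<forall>x. khk_den e x (-1/2) \<noteq> 0 \<longrightarrow> snd (khk e (x, -1/2)) = -1/2)
       \<and> conj_rot_inf (khk_inf e) (rho_plus e)"
  using conj_rot_circle_khk_pos conj_rot_circle_khk_neg curve_0 khk_fixes_0 curve_minus_1 khk_fixes_0_minus_1
    snd_khk_on_line conj_rot_inf_khk
  by blast

end
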